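(* For every integer $j\geq 3$, the limit $\lim_{t\to-1}g_j(t)$ exists and is strictly negative.
   Context: $\omega_j$ is the surface area of $\mathbb{S}^{j-1}\subseteq\mathbb{R}^j$. The Berg functions $g_j\in C^\infty(-1,1)$, $j\ge2$, are defined by $g_2(t)=\frac{1}{2\pi}(\pi-\arccos t)(1-t^2)^{1/2}-\frac{1}{4\pi}t$, $g_3(t)=\frac{1}{2\pi}\big(1+t\log(1-t)+(\tfrac43-\log 2)t\big)$, $g_{j+2}(t)=\frac{j+1}{2\pi}g_j(t)+\frac{j+1}{2\pi(j-1)}t\,g_j'(t)+\frac{j+1}{2\pi\omega_j}t$. *)

theory Defs
  imports "HOL-Analysis.Analysis"
begin

text \<open>Surface area of the unit sphere S^(j-1) in R^j: 2 pi^(j/2) / Gamma(j/2).\<close>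
definition sphere_area :: "nat \<Rightarrow> real" where
  "sphere_area j = 2 * pi powr (real j / 2) / Gamma (real j / 2)"

text \<open>Berg functions g_j (meaningful for j >= 2, on (-1,1)); indices 0 and 1 are dummies.
  The clause for Suc (Suc (Suc (Suc n))) is the recursion with j = n + 2.\<close>
fun berg :: "nat \<Rightarrow> real \<Rightarrow> real" where
  "berg 0 = (\<lambda>t. 0)"
| "berg (Suc 0) = (\<lambda>t. 0)"
| "berg (Suc (Suc 0)) =
     (\<lambda>t. 1 / (2 * pi) * (pi - arccos t) * sqrt (1 - t\<^sup>2) - 1 / (4 * pi) * t)"
| "berg (Suc (Suc (Suc 0))) =
     (\<lambda>t. 1 / (2 * pi) * (1 + t * ln (1 - t) + (4 / 3 - ln 2) * t))"
| "berg (Suc (Suc (Suc (Suc n)))) =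
     (let j = n + 2 in
      (\<lambda>t. (real j + 1) / (2 * pi) * berg j t
          + (real j + 1) / (2 * pi * (real j - 1)) * t * deriv (berg j) t
          + (real j + 1) / (2 * pi * sphere_area j) * t))"

end

theory Submission
  imports Defs
begin

text \<open>
  Each g_j (j >= 2) extends smoothly to t = -1 and solves
  (1 - t^2) g'' - (j - 1) t g' + (j - 1) g = - c t on (-1, 0) for some c >= 0.
  Since 1 - t^2 vanishes at -1, the equation forces g_j'(-1) = c / (j - 1) - g_j(-1).
  The recursion reads g_(j+2) = beta ((j - 1) g_j + t g_j') + B t with beta, B > 0; it carries the
  equation over to j + 2 with the constant beta (j + 2) c, and it gives
  g_(j+2)(-1) = beta (j g_j(-1) - c / (j - 1)) - B,
  which is negative as soon as j (j - 1) g_j(-1) <= c. That inequality holds for j = 2 and j = 3,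
  where g_2(-1) = 1 / (4 pi) and g_3(-1) = -1 / (6 pi), and is then inherited along j, j + 2, ...
  Smoothness of g_2 at -1 comes from the power series of (pi - arccos t) / sqrt (1 - t^2) about -1.
\<close>

section \<open>Functions smooth up to the left endpoint\<close>

definition smooth_left_closed :: "real \<Rightarrow> real \<Rightarrow> (real \<Rightarrow> real) \<Rightarrow> bool" where
  "smooth_left_closed a b f \<longleftrightarrow>
     (\<forall>m. (\<forall>t\<in>{a<..<b}. (deriv^^m) f differentiable (at t))
        \<and> (\<exists>L. ((deriv^^m) f \<longlongrightarrow> L) (at_right a)))"

lemma higher_deriv_eq_family:
  assumes "\<forall>t\<in>{a<..<b}. f t = G 0 t"
    and "\<And>m t. t \<in> {a<..<b} \<Longrightarrow> (G m has_real_derivative G (Suc m) t) (at t)"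
    and "t \<in> {a<..<b}"
  shows "(deriv^^m) f t = G m t"
  using assms(3)
proof (induction m arbitrary: t)
  case 0
  then show ?case using assms(1) by simp
next
  case (Suc m)
  have "eventually (\<lambda>x. (deriv^^m) f x = G m x) (nhds t)"
    using eventually_nhds_in_open[of "{a<..<b}" t] Suc by (auto elim: eventually_mono)
  then have "deriv ((deriv^^m) f) t = deriv (G m) t"
    by (rule deriv_cong_ev) simp
  also have "\<dots> = G (Suc m) t"
    using assms(2)[OF Suc.prems] by (rule DERIV_imp_deriv)
  finally show ?case by simp
qed

lemma smooth_left_closedI:
  assumes "a < b" "\<forall>t\<in>{a<..<b}. f t = G 0 t"
    and deriv_G: "\<And>m t. t \<in> {a<..<b} \<Longrightarrow> (G m has_real_derivative G (Suc m) t) (at t)"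
    and lim_G: "\<And>m. \<exists>L. (G m \<longlongrightarrow> L) (at_right a)"
  shows "smooth_left_closed a b f"
proof -
  note family = higher_deriv_eq_family[OF assms(2) deriv_G]
  show ?thesis
    unfolding smooth_left_closed_def
  proof (intro allI conjI ballI)
    fix m and t :: real
    assume t: "t \<in> {a<..<b}"
    have "((deriv^^m) f has_real_derivative G (Suc m) t) (at t)"
      by (rule has_field_derivative_transform_within_open[OF deriv_G[OF t], of "{a<..<b}"])
         (use t family in auto)
    then show "(deriv^^m) f differentiable (at t)"
      using real_differentiable_def by blast
  next
    fix m
    obtain L where "(G m \<longlongrightarrow> L) (at_right a)"
      using lim_G by blast
    moreover have "eventually (\<lambda>t. G m t = (deriv^^m) f t) (at_right a)"
      using family by (intro eventually_at_rightI[OF _ \<open>a < b\<close>]) simp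
    ultimately show "\<exists>L. ((deriv^^m) f \<longlongrightarrow> L) (at_right a)"
      using Lim_transform_eventually by blast
  qed
qed

lemma smooth_left_closed_across:
  assumes "c < a" "a < b" "\<forall>t\<in>{a<..<b}. f t = G 0 t"
    and deriv_G: "\<And>m t. t \<in> {c<..<b} \<Longrightarrow> (G m has_real_derivative G (Suc m) t) (at t)"
  shows "smooth_left_closed a b f" and "(f \<longlongrightarrow> G 0 a) (at_right a)"
proof -
  have lim_G: "(G m \<longlongrightarrow> G m a) (at_right a)" for m
    using DERIV_isCont[OF deriv_G[of a m]] assms(1,2)
    by (simp add: continuous_at_imp_continuous_at_within flip: continuous_within)
  show "smooth_left_closed a b f"
  proof (rule smooth_left_closedI[of a b f G])
    show "\<exists>L. (G m \<longlongrightarrow> L) (at_right a)" for m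
      using lim_G by blast
  qed (use assms in \<open>auto intro: deriv_G\<close>)
  show "(f \<longlongrightarrow> G 0 a) (at_right a)"
  proof (rule Lim_transform_eventually[OF lim_G[of 0]])
    show "eventually (\<lambda>t. G 0 t = f t) (at_right a)"
      using assms(3) by (intro eventually_at_rightI[OF _ \<open>a < b\<close>]) simp
  qed
qed

lemma smooth_left_closed_DERIV:
  assumes "smooth_left_closed a b f" "t \<in> {a<..<b}"
  shows "((deriv^^m) f has_real_derivative (deriv^^Suc m) f t) (at t)"
  using assms unfolding smooth_left_closed_def by (simp add: DERIV_deriv_iff_real_differentiable)

lemma smooth_left_closed_limit:
  assumes "smooth_left_closed a b f"
  obtains L where "((deriv^^m) f \<longlongrightarrow> L) (at_right a)"
  using assms unfolding smooth_left_closed_def by blast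

section \<open>The differential equation of the Berg functions\<close>

definition solves_berg_ode :: "real \<Rightarrow> real \<Rightarrow> (real \<Rightarrow> real) \<Rightarrow> bool" where
  "solves_berg_ode n c f \<longleftrightarrow>
     (\<forall>t\<in>{-1<..<0}. (1 - t\<^sup>2) * deriv (deriv f) t - n * t * deriv f t + n * f t = - c * t)"

lemma solves_berg_ode_derivative:
  assumes f: "smooth_left_closed (-1) 0 f" and ode: "solves_berg_ode n c f"
    and t: "t \<in> {-1<..<0}"
  shows "(1 - t\<^sup>2) * (deriv^^3) f t - (n + 2) * t * (deriv^^2) f t = - c"
proof -
  define F where "F m = (deriv^^m) f" for m
  have DF: "(F m has_real_derivative F (Suc m) t) (at t)" for m
    unfolding F_def by (rule smooth_left_closed_DERIV[OF f t])
  let ?lhs = "\<lambda>x. (1 - x\<^sup>2) * F 2 x - n * x * F 1 x + n * F 0 x"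
  have "(?lhs has_real_derivative
      - (2 * t) * F 2 t + (1 - t\<^sup>2) * F 3 t - n * F 1 t - n * t * F 2 t + n * F 1 t) (at t)"
    unfolding numeral_2_eq_2 numeral_3_eq_3 One_nat_def
    by (auto intro!: derivative_eq_intros DF)
  moreover have "(?lhs has_real_derivative - c) (at t)"
  proof (rule has_field_derivative_transform_within_open)
    show "((\<lambda>x. - c * x) has_real_derivative - c) (at t)"
      by (auto intro!: derivative_eq_intros)
    show "- c * x = ?lhs x" if "x \<in> {-1<..<0}" for x
      using ode that by (simp add: solves_berg_ode_def F_def numeral_2_eq_2)
  qed (use t in auto)
  ultimately show ?thesis
    using DERIV_unique unfolding F_def by (fastforce simp: algebra_simps)
qed

lemma solves_berg_ode_boundary:
  assumes f: "smooth_left_closed (-1) 0 f" and ode: "solves_berg_ode n c f"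
    and lim: "(f \<longlongrightarrow> a) (at_right (-1))" and "n \<noteq> 0"
  shows "(deriv f \<longlongrightarrow> c / n - a) (at_right (-1))"
proof -
  obtain b where b: "(deriv f \<longlongrightarrow> b) (at_right (-1))"
    using smooth_left_closed_limit[OF f, where m = 1] by auto
  obtain d where d: "(deriv (deriv f) \<longlongrightarrow> d) (at_right (-1))"
    using smooth_left_closed_limit[OF f, where m = 2] by (auto simp: numeral_2_eq_2)
  let ?res = "\<lambda>t. (1 - t\<^sup>2) * deriv (deriv f) t - n * t * deriv f t + n * f t + c * t"
  have "(?res \<longlongrightarrow> (1 - (-1)\<^sup>2) * d - n * (-1) * b + n * a + c * (-1)) (at_right (-1))"
    by (intro tendsto_intros b d lim)
  moreover have "(?res \<longlongrightarrow> 0) (at_right (-1))"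
  proof (rule Lim_transform_eventually[OF tendsto_const])
    show "eventually (\<lambda>t. 0 = ?res t) (at_right (-1))"
      using ode by (intro eventually_at_rightI[where b = 0]) (auto simp: solves_berg_ode_def)
  qed
  ultimately have "n * b + n * a = c"
    using tendsto_unique[OF trivial_limit_at_right_real] by fastforce
  then have "b = c / n - a"
    using \<open>n \<noteq> 0\<close> by (simp add: field_simps)
  then show ?thesis
    using b by simp
qed

lemma berg_transform:
  assumes "a < b" and f: "smooth_left_closed a b f"
    and g: "\<forall>t\<in>{a<..<b}. g t = \<beta> * (n * f t + t * deriv f t) + B * t"
  shows "smooth_left_closed a b g"
    and "t \<in> {a<..<b} \<Longrightarrow> (deriv^^m) g t = \<beta> * ((n + real m) * (deriv^^m) f t
           + t * (deriv^^Suc m) f t) + (if m = 0 then B * t else if m = 1 then B else 0)"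
proof -
  define F where "F m = (deriv^^m) f" for m
  define G where "G m t = \<beta> * ((n + real m) * F m t + t * F (Suc m) t)
    + (if m = 0 then B * t else if m = 1 then B else 0)" for m t
  have G0: "\<forall>t\<in>{a<..<b}. g t = G 0 t"
    using g by (simp add: G_def F_def)
  have deriv_G: "(G m has_real_derivative G (Suc m) t) (at t)" if t: "t \<in> {a<..<b}" for m t
  proof -
    have DF: "(F k has_real_derivative F (Suc k) t) (at t)" for k
      unfolding F_def by (rule smooth_left_closed_DERIV[OF f t])
    show ?thesis
      unfolding G_def
      by (cases "m = 0"; cases "m = 1") (auto intro!: derivative_eq_intros DF simp: algebra_simps)
  qed
  have "\<forall>k. \<exists>L. (F k \<longlongrightarrow> L) (at_right a)"
    using f unfolding smooth_left_closed_def F_def by blast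
  then obtain L where L: "\<And>k. (F k \<longlongrightarrow> L k) (at_right a)"
    by metis
  have lim_G: "(G m \<longlongrightarrow> \<beta> * ((n + real m) * L m + a * L (Suc m))
      + (if m = 0 then B * a else if m = 1 then B else 0)) (at_right a)" for m
    unfolding G_def by (cases "m = 0"; cases "m = 1") (auto intro!: tendsto_intros L)
  show "smooth_left_closed a b g"
    by (rule smooth_left_closedI[OF \<open>a < b\<close> G0 deriv_G]) (simp, use lim_G in blast)
  show "t \<in> {a<..<b} \<Longrightarrow> (deriv^^m) g t = \<beta> * ((n + real m) * (deriv^^m) f t
           + t * (deriv^^Suc m) f t) + (if m = 0 then B * t else if m = 1 then B else 0)"
    using higher_deriv_eq_family[OF G0 deriv_G] by (simp add: G_def F_def)
qed

lemma berg_transform_ode: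
  assumes f: "smooth_left_closed (-1) 0 f" and ode: "solves_berg_ode n c f"
    and g: "\<forall>t\<in>{-1<..<0}. g t = \<beta> * (n * f t + t * deriv f t) + B * t"
  shows "solves_berg_ode (n + 2) (\<beta> * (n + 3) * c) g"
  unfolding solves_berg_ode_def
proof
  fix t :: real
  assume t: "t \<in> {-1<..<0}"
  note D = berg_transform(2)[OF _ f g t, simplified]
  have E0: "(1 - t\<^sup>2) * (deriv^^2) f t - n * t * deriv f t + n * f t = - c * t"
    using ode t by (simp add: solves_berg_ode_def numeral_2_eq_2)
  have E1: "(1 - t\<^sup>2) * (deriv^^3) f t - (n + 2) * t * (deriv^^2) f t = - c"
    by (rule solves_berg_ode_derivative[OF f ode t])
  have "(1 - t\<^sup>2) * (deriv^^2) g t - (n + 2) * t * deriv g t + (n + 2) * g t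
      = \<beta> * ((n + 2) * ((1 - t\<^sup>2) * (deriv^^2) f t - n * t * deriv f t + n * f t)
          + t * ((1 - t\<^sup>2) * (deriv^^3) f t - (n + 2) * t * (deriv^^2) f t))"
    using D[of 0] D[of 1] D[of 2] by (simp add: numeral_2_eq_2 numeral_3_eq_3 algebra_simps)
  also have "\<dots> = - (\<beta> * (n + 3) * c) * t"
    unfolding E0 E1 by (simp add: algebra_simps)
  finally show "(1 - t\<^sup>2) * deriv (deriv g) t - (n + 2) * t * deriv g t + (n + 2) * g t
      = - (\<beta> * (n + 3) * c) * t"
    by (simp add: numeral_2_eq_2)
qed

lemma berg_transform_limit:
  assumes f: "smooth_left_closed (-1) 0 f" and ode: "solves_berg_ode n c f"
    and g: "\<forall>t\<in>{-1<..<0}. g t = \<beta> * (n * f t + t * deriv f t) + B * t"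
    and lim: "(f \<longlongrightarrow> a) (at_right (-1))" and "n \<noteq> 0"
  shows "(g \<longlongrightarrow> \<beta> * ((n + 1) * a - c / n) - B) (at_right (-1))"
proof (rule Lim_transform_eventually)
  have "((\<lambda>t. \<beta> * (n * f t + t * deriv f t) + B * t)
      \<longlongrightarrow> \<beta> * (n * a + (-1) * (c / n - a)) + B * (-1)) (at_right (-1))"
    by (intro tendsto_intros lim solves_berg_ode_boundary[OF f ode lim \<open>n \<noteq> 0\<close>])
  then show "((\<lambda>t. \<beta> * (n * f t + t * deriv f t) + B * t)
      \<longlongrightarrow> \<beta> * ((n + 1) * a - c / n) - B) (at_right (-1))"
    by (simp add: algebra_simps)
  show "eventually (\<lambda>t. \<beta> * (n * f t + t * deriv f t) + B * t = g t) (at_right (-1))"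
    using g by (intro eventually_at_rightI[where b = 0]) auto
qed

lemma sphere_area_pos: "1 \<le> j \<Longrightarrow> 0 < sphere_area j"
  unfolding sphere_area_def by (intro divide_pos_pos mult_pos_pos Gamma_real_pos) auto

lemma berg_add_two:
  assumes "2 \<le> j"
  shows "berg (j + 2) t = (real j + 1) / (2 * pi * (real j - 1))
      * ((real j - 1) * berg j t + t * deriv (berg j) t)
    + (real j + 1) / (2 * pi * sphere_area j) * t"
proof -
  obtain k where k: "j = Suc (Suc k)"
    using assms by (metis add_2_eq_Suc le_Suc_ex)
  then have "j + 2 = Suc (Suc (Suc (Suc k)))"
    by simp
  then have eq: "berg (j + 2) t = (real j + 1) / (2 * pi) * berg j t
      + (real j + 1) / (2 * pi * (real j - 1)) * t * deriv (berg j) t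
      + (real j + 1) / (2 * pi * sphere_area j) * t"
    using k by (simp add: Let_def)
  moreover have "real j - 1 \<noteq> 0"
    using assms by simp
  ultimately show ?thesis
    unfolding eq using sphere_area_pos[of j] by (simp add: field_simps)
qed

section \<open>The Berg function g_3\<close>

lemma DERIV_fact_div_power:
  fixes t :: real
  assumes "t < 1"
  shows "((\<lambda>t. fact k / (1 - t) ^ Suc k) has_real_derivative fact (Suc k) / (1 - t) ^ Suc (Suc k))
    (at t)"
proof -
  have quotient_eq:
    "fact k * (real (Suc k) * x ^ k) / (x ^ Suc k)\<^sup>2 = fact (Suc k) / x ^ Suc (Suc k)"
    if "x \<noteq> 0" for x :: real
  proof -
    have "(x ^ Suc k)\<^sup>2 = x ^ k * x ^ Suc (Suc k)"
      by (simp flip: power_add power_mult_distrib add: power2_eq_square)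
    then show ?thesis
      using that by (simp add: field_simps)
  qed
  have "((\<lambda>t. fact k / (1 - t) ^ Suc k) has_real_derivative
      fact k * (real (Suc k) * (1 - t) ^ k) / ((1 - t) ^ Suc k)\<^sup>2) (at t)"
    using assms by (auto intro!: derivative_eq_intros simp del: power_Suc simp: power2_eq_square)
  then show ?thesis
    using assms quotient_eq[of "1 - t"] by simp
qed

fun berg3_deriv :: "nat \<Rightarrow> real \<Rightarrow> real" where
  "berg3_deriv 0 t = berg 3 t"
| "berg3_deriv (Suc 0) t = 1 / (2 * pi) * (ln (1 - t) - t / (1 - t) + (4 / 3 - ln 2))"
| "berg3_deriv (Suc (Suc m)) t =
     - (1 / (2 * pi)) * (fact m / (1 - t) ^ Suc m + fact (Suc m) / (1 - t) ^ Suc (Suc m))"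

lemma berg3_deriv_DERIV: "t < 1 \<Longrightarrow> (berg3_deriv m has_real_derivative berg3_deriv (Suc m) t) (at t)"
proof (induction m t rule: berg3_deriv.induct)
  case (1 t)
  have "berg3_deriv 0 = (\<lambda>t. 1 / (2 * pi) * (1 + t * ln (1 - t) + (4 / 3 - ln 2) * t))"
    by (rule ext) (simp add: numeral_3_eq_3)
  then show ?case
    using 1 by (auto intro!: derivative_eq_intros simp: field_simps)
next
  case (2 t)
  have "berg3_deriv (Suc 0) = (\<lambda>t. 1 / (2 * pi) * (ln (1 - t) - t / (1 - t) + (4 / 3 - ln 2)))"
    by (rule ext) simp
  then show ?case
    using 2 by (auto intro!: derivative_eq_intros simp: field_simps power2_eq_square)
next
  case (3 m t)
  have "berg3_deriv (Suc (Suc m)) = (\<lambda>t. - (1 / (2 * pi))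
      * (fact m / (1 - t) ^ Suc m + fact (Suc m) / (1 - t) ^ Suc (Suc m)))"
    by (rule ext) simp
  moreover have "((\<lambda>t. - (1 / (2 * pi))
      * (fact m / (1 - t) ^ Suc m + fact (Suc m) / (1 - t) ^ Suc (Suc m))) has_real_derivative
      - (1 / (2 * pi)) * (fact (Suc m) / (1 - t) ^ Suc (Suc m)
        + fact (Suc (Suc m)) / (1 - t) ^ Suc (Suc (Suc m)))) (at t)"
    using 3 by (intro DERIV_cmult DERIV_add DERIV_fact_div_power)
  ultimately show ?case
    by (simp only: berg3_deriv.simps(3))
qed

lemma berg_3:
  shows "smooth_left_closed (-1) 0 (berg 3)"
    and "solves_berg_ode 2 (3 / (2 * pi)) (berg 3)"
    and "(berg 3 \<longlongrightarrow> - 1 / (6 * pi)) (at_right (-1))"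
proof -
  have family: "\<forall>t\<in>{-1<..<0}. berg 3 t = berg3_deriv 0 t"
    by simp
  have deriv_family: "(berg3_deriv m has_real_derivative berg3_deriv (Suc m) t) (at t)"
    if "t \<in> {-2<..<0}" for m t
    using that by (intro berg3_deriv_DERIV) simp
  note across = smooth_left_closed_across[of "-2" "-1" 0, OF _ _ family deriv_family]
  show "smooth_left_closed (-1) 0 (berg 3)"
    using across(1) by simp
  show "(berg 3 \<longlongrightarrow> - 1 / (6 * pi)) (at_right (-1))"
    using across(2) by (simp add: numeral_3_eq_3 field_simps)
  show "solves_berg_ode 2 (3 / (2 * pi)) (berg 3)"
    unfolding solves_berg_ode_def
  proof
    fix t :: real
    assume t: "t \<in> {-1<..<0}"
    note D = higher_deriv_eq_family[OF family berg3_deriv_DERIV, of t, simplified]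
    define u where "u = 1 - t"
    define k where "k = 4 / 3 - ln (2::real)"
    have "u > 0" and t_eq: "t = 1 - u"
      using t by (auto simp: u_def)
    have d2: "berg3_deriv 2 t = - (1 / (2 * pi)) * (1 / u + 1 / u\<^sup>2)"
      by (simp add: numeral_2_eq_2 u_def)
    have d1: "berg3_deriv 1 t = 1 / (2 * pi) * (ln u - t / u + k)"
      by (simp add: u_def k_def)
    have d0: "berg3_deriv 0 t = 1 / (2 * pi) * (1 + t * ln u + k * t)"
      by (simp add: u_def k_def numeral_3_eq_3)
    have "(1 - t\<^sup>2) * berg3_deriv 2 t - 2 * t * berg3_deriv 1 t + 2 * berg3_deriv 0 t
        = 1 / (2 * pi) * ((1 - t\<^sup>2) * (- (1 / u + 1 / u\<^sup>2)) - 2 * t * (ln u - t / u + k)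
          + 2 * (1 + t * ln u + k * t))"
      unfolding d0 d1 d2 using \<open>u > 0\<close> by (simp add: field_simps)
    also have "\<dots> = - (3 / (2 * pi)) * t"
      using \<open>u > 0\<close> unfolding t_eq by (simp add: field_simps power2_eq_square)
    finally have "(1 - t\<^sup>2) * berg3_deriv 2 t - 2 * t * berg3_deriv 1 t + 2 * berg3_deriv 0 t
        = - (3 / (2 * pi)) * t" .
    then show "(1 - t\<^sup>2) * deriv (deriv (berg 3)) t - 2 * t * deriv (berg 3) t + 2 * berg 3 t
        = - (3 / (2 * pi)) * t"
      using t D[of 1] D[of 2] by (simp add: numeral_2_eq_2)
  qed
qed

section \<open>The Berg function g_2\<close>

text \<open>Taylor coefficients about -1 of F t = (pi - arccos t) / sqrt (1 - t^2); the recursion comes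
  from the equation (1 - t^2) F' = 1 + t F.\<close>
fun arccos_coeff :: "nat \<Rightarrow> real" where
  "arccos_coeff 0 = 1"
| "arccos_coeff (Suc k) = (real k + 1) / (2 * real k + 3) * arccos_coeff k"

lemma arccos_coeff_bounds: "0 \<le> arccos_coeff k \<and> arccos_coeff k \<le> 1"
proof (induction k)
  case (Suc k)
  have "(real k + 1) * arccos_coeff k \<le> (real k + 1) * 1"
    using Suc by (intro mult_left_mono) auto
  then show ?case
    using Suc by (simp add: field_simps)
qed simp

lemma summable_arccos_coeff_diffs:
  assumes "\<bar>x\<bar> < 1"
  shows "summable (\<lambda>n. (diffs^^m) arccos_coeff n * x ^ n)"
  using assms
proof (induction m arbitrary: x)
  case 0
  show ?case
  proof (rule summable_comparison_test[of _ "\<lambda>n. \<bar>x\<bar> ^ n"])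
    show "\<exists>N. \<forall>n\<ge>N. norm ((diffs^^0) arccos_coeff n * x ^ n) \<le> \<bar>x\<bar> ^ n"
      using arccos_coeff_bounds by (auto simp: abs_mult power_abs intro!: mult_left_le_one_le)
    show "summable (\<lambda>n. \<bar>x\<bar> ^ n)"
      using 0 by (intro summable_geometric) simp
  qed
next
  case (Suc m)
  have "summable (\<lambda>n. diffs ((diffs^^m) arccos_coeff) n * x ^ n)"
    by (rule termdiff_converges[of x 1]) (use Suc in auto)
  then show ?case
    by simp
qed

definition arccos_ratio :: "nat \<Rightarrow> real \<Rightarrow> real" where
  "arccos_ratio m t = (\<Sum>n. (diffs^^m) arccos_coeff n * (t + 1) ^ n)"

lemma arccos_ratio_DERIV:
  assumes "\<bar>t + 1\<bar> < 1"
  shows "(arccos_ratio m has_real_derivative arccos_ratio (Suc m) t) (at t)"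
proof -
  have "((\<lambda>x. \<Sum>n. (diffs^^m) arccos_coeff n * x ^ n) has_real_derivative
      (\<Sum>n. diffs ((diffs^^m) arccos_coeff) n * (t + 1) ^ n)) (at (t + 1))"
    by (rule termdiffs_strong'[of 1]) (use assms summable_arccos_coeff_diffs in auto)
  then show ?thesis
    using DERIV_shift[of "\<lambda>x. \<Sum>n. (diffs^^m) arccos_coeff n * x ^ n" _ t 1]
    by (simp add: arccos_ratio_def[abs_def])
qed

lemma sums_arccos_coeff:
  assumes "\<bar>x\<bar> < 1"
  shows "(\<lambda>n. arccos_coeff n * x ^ n) sums (\<Sum>n. arccos_coeff n * x ^ n)"
    and "(\<lambda>n. diffs arccos_coeff n * x ^ n) sums (\<Sum>n. diffs arccos_coeff n * x ^ n)"
  using summable_arccos_coeff_diffs[OF assms, of 0] summable_arccos_coeff_diffs[OF assms, of 1]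
  by (simp_all add: summable_sums)

text \<open>The series of (n + 1) a_n x^(n+1) is summed in two ways; comparing them gives the
  differential equation of the power series.\<close>
lemma arccos_coeff_weighted_sums_rec:
  fixes x :: real
  defines "s \<equiv> \<Sum>n. arccos_coeff n * x ^ n" and "d \<equiv> \<Sum>n. diffs arccos_coeff n * x ^ n"
  assumes "\<bar>x\<bar> < 1"
  shows "(\<lambda>n. (real n + 1) * arccos_coeff n * x ^ Suc n) sums (2 * x * d + (s - 1))"
proof -
  have "(\<lambda>n. 2 * x * (diffs arccos_coeff n * x ^ n) + arccos_coeff (Suc n) * x ^ Suc n)
      sums (2 * x * d + (s - 1))"
    using sums_arccos_coeff[OF assms(3)] sums_Suc_iff[of "\<lambda>n. arccos_coeff n * x ^ n" "s - 1"]
    unfolding s_def d_def by (intro sums_add sums_mult) simp_all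
  moreover have "2 * x * (diffs arccos_coeff n * x ^ n) + arccos_coeff (Suc n) * x ^ Suc n
      = (real n + 1) * arccos_coeff n * x ^ Suc n" for n
  proof -
    have rec: "(2 * real n + 3) * arccos_coeff (Suc n) = (real n + 1) * arccos_coeff n"
      by simp
    have "2 * x * (diffs arccos_coeff n * x ^ n) + arccos_coeff (Suc n) * x ^ Suc n
        = (2 * real n + 3) * arccos_coeff (Suc n) * x ^ Suc n"
      by (simp add: diffs_def algebra_simps del: arccos_coeff.simps)
    then show ?thesis
      unfolding rec .
  qed
  ultimately show ?thesis
    by simp
qed

lemma arccos_coeff_weighted_sums:
  fixes x :: real
  defines "s \<equiv> \<Sum>n. arccos_coeff n * x ^ n" and "d \<equiv> \<Sum>n. diffs arccos_coeff n * x ^ n"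
  assumes "\<bar>x\<bar> < 1"
  shows "(\<lambda>n. (real n + 1) * arccos_coeff n * x ^ Suc n) sums (x\<^sup>2 * d + x * s)"
proof -
  define v where "v n = real n * arccos_coeff n * x ^ Suc n" for n
  have "(\<lambda>n. v (Suc n)) = (\<lambda>n. x\<^sup>2 * (diffs arccos_coeff n * x ^ n))"
    by (simp add: v_def diffs_def power2_eq_square algebra_simps)
  then have "(\<lambda>n. v (Suc n)) sums (x\<^sup>2 * d)"
    using sums_arccos_coeff(2)[OF assms(3)] unfolding d_def by (simp add: sums_mult)
  then have "v sums (x\<^sup>2 * d)"
    using sums_Suc_iff[of v "x\<^sup>2 * d"] by (simp add: v_def)
  then have "(\<lambda>n. v n + x * (arccos_coeff n * x ^ n)) sums (x\<^sup>2 * d + x * s)"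
    using sums_arccos_coeff(1)[OF assms(3)] unfolding s_def by (intro sums_add sums_mult)
  moreover have "(\<lambda>n. v n + x * (arccos_coeff n * x ^ n))
      = (\<lambda>n. (real n + 1) * arccos_coeff n * x ^ Suc n)"
    by (rule ext) (simp add: v_def algebra_simps)
  ultimately show ?thesis
    by simp
qed

lemma arccos_coeff_series_ode:
  assumes "\<bar>x\<bar> < 1"
  shows "x * (2 - x) * (\<Sum>n. diffs arccos_coeff n * x ^ n)
    = 1 + (x - 1) * (\<Sum>n. arccos_coeff n * x ^ n)"
  using sums_unique2[OF arccos_coeff_weighted_sums_rec[OF assms]
      arccos_coeff_weighted_sums[OF assms]]
  by (simp add: algebra_simps power2_eq_square)

lemma arccos_ratio_ode:
  assumes "\<bar>t + 1\<bar> < 1"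
  shows "(1 - t\<^sup>2) * arccos_ratio 1 t = 1 + t * arccos_ratio 0 t"
  using arccos_coeff_series_ode[OF assms]
  by (simp add: arccos_ratio_def algebra_simps power2_eq_square)

lemma pi_minus_arccos_eq_arccos_ratio:
  assumes "t \<in> {-1<..<0}"
  shows "pi - arccos t = sqrt (1 - t\<^sup>2) * arccos_ratio 0 t"
proof -
  define G where "G x = sqrt (1 - x\<^sup>2) * arccos_ratio 0 x - (pi - arccos x)" for x
  have "(G has_real_derivative 0) (at x)" if x: "x \<in> {-1<..<0}" for x
  proof -
    have "0 < 1 - x\<^sup>2"
      using x by (simp add: abs_square_less_1)
    then have "(G has_real_derivative
        ((1 - x\<^sup>2) * arccos_ratio 1 x - x * arccos_ratio 0 x - 1) / sqrt (1 - x\<^sup>2)) (at x)"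
      unfolding G_def using x
      by (auto intro!: derivative_eq_intros arccos_ratio_DERIV[where m = 0, simplified]
               simp: field_simps real_sqrt_mult[symmetric])
    then show ?thesis
      using arccos_ratio_ode[of x] x by simp
  qed
  then obtain C where C: "\<forall>x\<in>{-1<..<0}. G x = C"
    using has_field_derivative_zero_constant[of "{-1<..<0::real}" G]
    by (metis convex_real_interval(8) has_field_derivative_at_within)
  have "(arccos \<longlongrightarrow> pi) (at (-1) within {-1..1})"
    using bspec[OF continuous_on_arccos'[unfolded continuous_on_def], of "-1"] by simp
  then have "(arccos \<longlongrightarrow> pi) (at_right (-1))"
    using at_within_Icc_at_right[of "-1::real" 1] by simp
  then have "(G \<longlongrightarrow> sqrt (1 - (-1)\<^sup>2) * arccos_ratio 0 (-1) - (pi - pi)) (at_right (-1))"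
    unfolding G_def using DERIV_isCont[OF arccos_ratio_DERIV[of "-1" 0]]
    by (intro tendsto_intros)
       (auto simp: continuous_at_imp_continuous_at_within simp flip: continuous_within)
  moreover have "(G \<longlongrightarrow> C) (at_right (-1))"
    using C
    by (intro Lim_transform_eventually[OF tendsto_const] eventually_at_rightI[where b = 0]) auto
  ultimately have "C = 0"
    using tendsto_unique[OF trivial_limit_at_right_real] by fastforce
  then show ?thesis
    using C assms unfolding G_def by auto
qed

fun berg2_deriv :: "nat \<Rightarrow> real \<Rightarrow> real" where
  "berg2_deriv 0 t = 1 / (2 * pi) * ((1 - t\<^sup>2) * arccos_ratio 0 t) - 1 / (4 * pi) * t"
| "berg2_deriv (Suc 0) t = 1 / (2 * pi) * (1 - t * arccos_ratio 0 t) - 1 / (4 * pi)"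
| "berg2_deriv (Suc (Suc m)) t =
     - (1 / (2 * pi)) * ((real m + 1) * arccos_ratio m t + t * arccos_ratio (Suc m) t)"

lemma berg2_deriv_DERIV:
  assumes "\<bar>t + 1\<bar> < 1"
  shows "(berg2_deriv m has_real_derivative berg2_deriv (Suc m) t) (at t)"
proof -
  have DF: "(arccos_ratio k has_real_derivative arccos_ratio (Suc k) t) (at t)" for k
    using arccos_ratio_DERIV[OF assms] .
  consider "m = 0" | "m = 1" | k where "m = Suc (Suc k)"
    by (metis One_nat_def not0_implies_Suc)
  then show ?thesis
  proof cases
    case 1
    have "(berg2_deriv 0 has_real_derivative
        1 / (2 * pi) * (- (2 * t) * arccos_ratio 0 t + (1 - t\<^sup>2) * arccos_ratio 1 t)
          - 1 / (4 * pi)) (at t)"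
      unfolding berg2_deriv.simps(1)[abs_def]
      by (auto intro!: derivative_eq_intros DF[of 0, simplified] simp: field_simps)
    moreover have "1 / (2 * pi) * (- (2 * t) * arccos_ratio 0 t + (1 - t\<^sup>2) * arccos_ratio 1 t)
        - 1 / (4 * pi) = berg2_deriv 1 t"
      unfolding arccos_ratio_ode[OF assms] by (simp add: field_simps)
    ultimately show ?thesis
      using 1 by simp
  next
    case 2
    have "(berg2_deriv (Suc 0) has_real_derivative berg2_deriv (Suc (Suc 0)) t) (at t)"
      unfolding berg2_deriv.simps(2)[abs_def] berg2_deriv.simps(3)
      by (auto intro!: derivative_eq_intros DF[of 0, simplified] simp: field_simps)
    then show ?thesis
      using 2 by simp
  next
    case (3 k)
    have "(berg2_deriv (Suc (Suc k)) has_real_derivative berg2_deriv (Suc (Suc (Suc k))) t) (at t)"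
      unfolding berg2_deriv.simps(3)[abs_def]
      by (auto intro!: derivative_eq_intros DF simp: field_simps)
    then show ?thesis
      using 3 by simp
  qed
qed

lemma berg_2:
  shows "smooth_left_closed (-1) 0 (berg 2)"
    and "solves_berg_ode 1 (1 / pi) (berg 2)"
    and "(berg 2 \<longlongrightarrow> 1 / (4 * pi)) (at_right (-1))"
proof -
  have family: "\<forall>t\<in>{-1<..<0}. berg 2 t = berg2_deriv 0 t"
  proof
    fix t :: real
    assume t: "t \<in> {-1<..<0}"
    have "berg 2 t = 1 / (2 * pi) * (pi - arccos t) * sqrt (1 - t\<^sup>2) - 1 / (4 * pi) * t"
      by (simp add: numeral_2_eq_2)
    also have "\<dots> = 1 / (2 * pi) * (sqrt (1 - t\<^sup>2) * sqrt (1 - t\<^sup>2) * arccos_ratio 0 t)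
        - 1 / (4 * pi) * t"
      unfolding pi_minus_arccos_eq_arccos_ratio[OF t] by (simp add: algebra_simps)
    also have "\<dots> = berg2_deriv 0 t"
      using t by (simp add: abs_square_le_1)
    finally show "berg 2 t = berg2_deriv 0 t" .
  qed
  have deriv_family: "(berg2_deriv m has_real_derivative berg2_deriv (Suc m) t) (at t)"
    if "t \<in> {-2<..<0}" for m t
    using that by (intro berg2_deriv_DERIV) auto
  note across = smooth_left_closed_across[of "-2" "-1" 0, OF _ _ family deriv_family]
  show "smooth_left_closed (-1) 0 (berg 2)"
    using across(1) by simp
  show "(berg 2 \<longlongrightarrow> 1 / (4 * pi)) (at_right (-1))"
    using across(2) by simp
  show "solves_berg_ode 1 (1 / pi) (berg 2)"
    unfolding solves_berg_ode_def
  proof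
    fix t :: real
    assume t: "t \<in> {-1<..<0}"
    note D = higher_deriv_eq_family[OF family deriv_family, of t, simplified]
    have "(1 - t\<^sup>2) * berg2_deriv 2 t - t * berg2_deriv 1 t + berg2_deriv 0 t
       = - (1 / (2 * pi)) * ((1 - t\<^sup>2) * arccos_ratio 0 t + t * ((1 - t\<^sup>2) * arccos_ratio 1 t))
         - t * (1 / (2 * pi) * (1 - t * arccos_ratio 0 t) - 1 / (4 * pi))
         + (1 / (2 * pi) * ((1 - t\<^sup>2) * arccos_ratio 0 t) - 1 / (4 * pi) * t)"
      by (simp add: numeral_2_eq_2 field_simps)
    also have "\<dots> = - (1 / pi) * t"
    proof -
      have ode: "(1 - t\<^sup>2) * arccos_ratio 1 t = 1 + t * arccos_ratio 0 t"
        using t by (intro arccos_ratio_ode) auto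
      show ?thesis
        unfolding ode by (simp add: field_simps power2_eq_square)
    qed
    finally show "(1 - t\<^sup>2) * deriv (deriv (berg 2)) t - 1 * t * deriv (berg 2) t + 1 * berg 2 t
        = - (1 / pi) * t"
      using t D[of 0] D[of 1] D[of 2] by (simp add: numeral_2_eq_2)
  qed
qed

definition berg_invariant :: "nat \<Rightarrow> bool" where
  "berg_invariant j \<longleftrightarrow> smooth_left_closed (-1) 0 (berg j) \<and>
     (\<exists>c a. 0 \<le> c \<and> solves_berg_ode (real j - 1) c (berg j) \<and> (berg j \<longlongrightarrow> a) (at_right (-1))
        \<and> real j * (real j - 1) * a \<le> c)"

lemma berg_invariant_2: "berg_invariant 2"
  unfolding berg_invariant_def using berg_2
  by (intro conjI exI[of _ "1 / pi"] exI[of _ "1 / (4 * pi)"]) (auto simp: field_simps)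

lemma berg_invariant_3: "berg_invariant 3"
  unfolding berg_invariant_def using berg_3
  by (intro conjI exI[of _ "3 / (2 * pi)"] exI[of _ "- 1 / (6 * pi)"]) (auto simp: field_simps)

lemma berg_step:
  assumes "2 \<le> j" and "berg_invariant j"
  shows "\<exists>L. (berg (j + 2) \<longlongrightarrow> L) (at_right (-1)) \<and> L < 0"
    and "berg_invariant (j + 2)"
proof -
  obtain c a where f: "smooth_left_closed (-1) 0 (berg j)" and "0 \<le> c"
    and ode: "solves_berg_ode (real j - 1) c (berg j)" and lim: "(berg j \<longlongrightarrow> a) (at_right (-1))"
    and bound: "real j * (real j - 1) * a \<le> c"
    using assms(2) unfolding berg_invariant_def by blast
  define n where "n = real j - 1"
  define \<beta> where "\<beta> = (real j + 1) / (2 * pi * n)"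
  define B where "B = (real j + 1) / (2 * pi * sphere_area j)"
  have "1 \<le> n" "0 < \<beta>" "0 < B"
    using assms(1) sphere_area_pos[of j] by (auto simp: n_def \<beta>_def B_def)
  have rec: "\<forall>t\<in>{-1<..<0}. berg (j + 2) t = \<beta> * (n * berg j t + t * deriv (berg j) t) + B * t"
    unfolding n_def \<beta>_def B_def by (intro ballI berg_add_two[OF assms(1)])
  note ode = ode[folded n_def]
  define L where "L = \<beta> * ((n + 1) * a - c / n) - B"
  have "(n + 1) * a \<le> c / n"
    using bound \<open>1 \<le> n\<close> by (simp add: n_def field_simps mult.commute)
  then have "\<beta> * ((n + 1) * a - c / n) \<le> 0"
    using \<open>0 < \<beta>\<close> by (simp add: mult_nonneg_nonpos)
  then have "L < 0"
    using \<open>0 < B\<close> unfolding L_def by linarith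
  moreover have lim': "(berg (j + 2) \<longlongrightarrow> L) (at_right (-1))"
    unfolding L_def using \<open>1 \<le> n\<close> by (intro berg_transform_limit[OF f ode rec lim]) simp
  ultimately show "\<exists>L. (berg (j + 2) \<longlongrightarrow> L) (at_right (-1)) \<and> L < 0"
    by blast
  have "solves_berg_ode (real (j + 2) - 1) (\<beta> * (n + 3) * c) (berg (j + 2))"
    using berg_transform_ode[OF f ode rec] by (simp add: n_def algebra_simps)
  moreover have "0 \<le> \<beta> * (n + 3) * c"
    using \<open>0 < \<beta>\<close> \<open>1 \<le> n\<close> \<open>0 \<le> c\<close> by simp
  moreover have "real (j + 2) * (real (j + 2) - 1) * L \<le> 0"
    using \<open>L < 0\<close> by (simp add: mult_nonneg_nonpos)
  ultimately show "berg_invariant (j + 2)"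
    unfolding berg_invariant_def using berg_transform(1)[OF _ f rec] lim' by fastforce
qed

lemma berg_invariant: "2 \<le> j \<Longrightarrow> berg_invariant j"
proof (induction j rule: less_induct)
  case (less j)
  consider "j = 2" | "j = 3" | "4 \<le> j"
    using less.prems by linarith
  then show ?case
  proof cases
    case 3
    define k where "k = j - 2"
    have j: "j = k + 2" and "2 \<le> k"
      using 3 by (auto simp: k_def)
    show ?thesis
      unfolding j using less.IH[of k] \<open>2 \<le> k\<close> j by (intro berg_step(2)) auto
  qed (simp_all add: berg_invariant_2 berg_invariant_3)
qed

theorem lemma4p6:
  fixes j :: nat
  assumes "j \<ge> 3"
  shows "\<exists>L. (berg j \<longlongrightarrow> L) (at_right (-1)) \<and> L < 0"
proof (cases "j = 3")
  case True
  then show ?thesis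
    using berg_3(3) by (intro exI[of _ "- 1 / (6 * pi)"]) simp
next
  case False
  then have "j = (j - 2) + 2" and "2 \<le> j - 2"
    using assms by auto
  then show ?thesis
    using berg_step(1)[OF _ berg_invariant] by metis
qed

end
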